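(* Let $\Omega\subseteq\mathbb{R}^d$ be open and $f\in\mathcal{E}(\Omega)=C^\infty(\Omega)$. Then for every compact $K\subset\Omega$, every $\alpha\in\mathbb{N}_0^d$ and every $p\in\mathbb{N}$ there exists $n\in\mathbb{N}_0$ such that for every $\varphi\in\mathcal{D}_n$, $$\sup_{x\in K}\left|\partial^\alpha(f\circledast\varphi)(x)-\partial^\alpha f(x)\right|\le (R_\varphi)^p.$$
   Context: $\mathcal{E}(\Omega)$ denotes the $C^\infty$ functions $\Omega\to\mathbb{C}$, regarded as distributions via $(f|\tau)=\int_\Omega f\tau$. $\mathcal{D}_0=\mathcal{D}(\mathbb{R}^d)$ is the space of compactly supported $C^\infty$ functions $\mathbb{R}^d\to\mathbb{C}$. For $\varphi\in\mathcal{D}_0$ let $R_\varphi=\sup\{\|x\|:\varphi(x)\neq0\}$ if $\varphi\neq0$, $R_0=1$. For $n\in\mathbb{N}$, $\mathcal{D}_n$ is the set of $\varphi\in\mathcal{D}_0$ that are real-valued, even, with $R_\varphi\le1/n$, $\int\varphi=1$, $\int x^\alpha\varphi(x)dx=0$ for $1\le|\alpha|\le n$, $\int|\varphi|\le1+1/n$, and $\sup_x|\partial^\alpha\varphi(x)|\le R_\varphi^{-2(|\alpha|+d)}$ for $|\alpha|\le n$. Let $\widetilde\Omega_\varphi=\{x\in\Omega: d(x,\partial\Omega)>2R_\varphi,\ \|x\|<1/R_\varphi\}$ and $C_{\Omega,\varphi}(x)=\int_{\widetilde\Omega_\varphi}\varphi(x-t)\,dt$. For $f$ locally integrable on $\Omega$,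 $(f\circledast\varphi)(x)=\int f(t)C_{\Omega,\varphi}(t)\varphi(x-t)\,dt$ for $x\in\Omega$. *)

theory Defs
  imports "HOL-Analysis.Analysis"
begin

text \<open>Points of R^d are vectors real^'n, where the finite index type 'n has d = CARD('n)
  elements; a linear order on 'n only fixes the order in which partial derivatives
  are applied (irrelevant for smooth functions).\<close>

definition pdiff :: "'n::finite \<Rightarrow> (real^'n \<Rightarrow> complex) \<Rightarrow> (real^'n \<Rightarrow> complex)" where
  "pdiff i g = (\<lambda>x. vector_derivative (\<lambda>t. g (x + t *\<^sub>R axis i 1)) (at 0))"

definition pdiffs :: "'n::finite list \<Rightarrow> (real^'n \<Rightarrow> complex) \<Rightarrow> (real^'n \<Rightarrow> complex)" where
  "pdiffs l g = foldr pdiff l g"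

definition Dalpha :: "('n::{finite,linorder} \<Rightarrow> nat) \<Rightarrow> ((real,'n) vec \<Rightarrow> complex) \<Rightarrow> ((real,'n) vec \<Rightarrow> complex)" where
  "Dalpha \<alpha> g = foldr (\<lambda>i h. (pdiff i ^^ \<alpha> i) h) (sorted_list_of_set (UNIV :: 'n set)) g"

definition mi_abs :: "('n::finite \<Rightarrow> nat) \<Rightarrow> nat" where
  "mi_abs \<alpha> = (\<Sum>i\<in>UNIV. \<alpha> i)"

definition mono_pow :: "real^'n::finite \<Rightarrow> ('n \<Rightarrow> nat) \<Rightarrow> real" where
  "mono_pow x \<alpha> = (\<Prod>i\<in>UNIV. (x $ i) ^ \<alpha> i)"

definition smooth_on :: "(real^'n::finite) set \<Rightarrow> (real^'n \<Rightarrow> complex) \<Rightarrow> bool" where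
  "smooth_on \<Omega> g \<longleftrightarrow>
     (\<forall>l. continuous_on \<Omega> (pdiffs l g)) \<and>
     (\<forall>l i. \<forall>x\<in>\<Omega>. ((\<lambda>t. pdiffs l g (x + t *\<^sub>R axis i 1)) has_vector_derivative
                       pdiff i (pdiffs l g) x) (at 0))"

definition D0 :: "(real^'n::finite \<Rightarrow> complex) set" where
  "D0 = {\<phi>. smooth_on UNIV \<phi> \<and> bounded {x. \<phi> x \<noteq> 0}}"

definition Rphi :: "(real^'n::finite \<Rightarrow> complex) \<Rightarrow> real" where
  "Rphi \<phi> = (if \<phi> = (\<lambda>_. 0) then 1 else Sup {norm x | x. \<phi> x \<noteq> 0})"

definition Dn :: "nat \<Rightarrow> (real^'n::{finite,linorder} \<Rightarrow> complex) set" where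
  "Dn n = (if n = 0 then D0 else
     {\<phi> \<in> D0.
        (\<forall>x. Im (\<phi> x) = 0) \<and>
        (\<forall>x. \<phi> (- x) = \<phi> x) \<and>
        Rphi \<phi> \<le> 1 / real n \<and>
        integral\<^sup>L lborel \<phi> = 1 \<and>
        (\<forall>\<alpha>. 1 \<le> mi_abs \<alpha> \<and> mi_abs \<alpha> \<le> n \<longrightarrow>
              integral\<^sup>L lborel (\<lambda>x. complex_of_real (mono_pow x \<alpha>) * \<phi> x) = 0) \<and>
        integral\<^sup>L lborel (\<lambda>x. norm (\<phi> x)) \<le> 1 + 1 / real n \<and>
        (\<forall>\<alpha>. mi_abs \<alpha> \<le> n \<longrightarrow>
              (\<forall>x. norm (Dalpha \<alpha> \<phi> x) \<le> Rphi \<phi> powr (- 2 * real (mi_abs \<alpha> + CARD('n)))))})"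

text \<open>\<Omega>~_\<phi>; d(x,\<partial>\<Omega>) is +\<infinity> when \<partial>\<Omega> is empty.\<close>
definition Omega_tilde :: "(real^'n::finite) set \<Rightarrow> (real^'n \<Rightarrow> complex) \<Rightarrow> (real^'n) set" where
  "Omega_tilde \<Omega> \<phi> = {x \<in> \<Omega>. (frontier \<Omega> = {} \<or> infdist x (frontier \<Omega>) > 2 * Rphi \<phi>)
                              \<and> norm x < 1 / Rphi \<phi>}"

definition C_Omega :: "(real^'n::finite) set \<Rightarrow> (real^'n \<Rightarrow> complex) \<Rightarrow> real^'n \<Rightarrow> complex" where
  "C_Omega \<Omega> \<phi> x = (LINT t : Omega_tilde \<Omega> \<phi> | lborel. \<phi> (x - t))"

definition conv_Omega :: "(real^'n::finite) set \<Rightarrow> (real^'n \<Rightarrow> complex) \<Rightarrow> (real^'n \<Rightarrow> complex) \<Rightarrow> real^'n \<Rightarrow> complex" where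
  "conv_Omega \<Omega> f \<phi> x = (LINT t : \<Omega> | lborel. f t * C_Omega \<Omega> \<phi> t * \<phi> (x - t))"

end

theory Submission
  imports Defs
begin

text \<open>For small \<open>R = Rphi \<phi>\<close> the cut-off \<open>C_Omega \<Omega> \<phi>\<close> equals 1 on the support of
  \<open>\<phi> (x - \<cdot>)\<close> for all x near K, so there \<open>f \<circledast> \<phi>\<close> is the ordinary convolution
  \<open>f * \<phi>\<close> and its derivatives are \<open>\<partial>\<^sup>\<alpha> f * \<phi>\<close> (differentiation under the integral).
  Expanding \<open>\<partial>\<^sup>\<alpha> f (x - s)\<close> by Taylor's formula of order p, the vanishing moments of \<open>\<phi>\<close>
  annihilate the terms of order 1 to p and \<open>\<integral>\<phi> = 1\<close> reproduces \<open>\<partial>\<^sup>\<alpha> f x\<close>. The remainder is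
  at most \<open>C R\<^sup>p\<^sup>+\<^sup>1 \<integral>|\<phi>| \<le> 2 C R\<^sup>p\<^sup>+\<^sup>1\<close>, with C bounding the derivatives of order
  \<open>|\<alpha>| + p + 1\<close> near K; this is at most \<open>R\<^sup>p\<close> once \<open>R \<le> 1/n\<close> for n large.\<close>

lemma pdiffs_Nil [simp]: "pdiffs [] g = g"
  by (simp add: pdiffs_def)

lemma pdiffs_Cons [simp]: "pdiffs (i # l) g = pdiff i (pdiffs l g)"
  by (simp add: pdiffs_def)

lemma pdiffs_append: "pdiffs (l1 @ l2) g = pdiffs l1 (pdiffs l2 g)"
  by (simp add: pdiffs_def)

lemma funpow_pdiff: "(pdiff i ^^ k) g = pdiffs (replicate k i) g"
  by (induct k) simp_all

definition mi_list :: "('n::{finite,linorder} \<Rightarrow> nat) \<Rightarrow> 'n list" where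
  "mi_list \<alpha> = concat (map (\<lambda>i. replicate (\<alpha> i) i) (sorted_list_of_set UNIV))"

lemma Dalpha_eq_pdiffs: "Dalpha \<alpha> g = pdiffs (mi_list \<alpha>) g"
proof -
  have "foldr (\<lambda>i h. (pdiff i ^^ \<alpha> i) h) xs g = pdiffs (concat (map (\<lambda>i. replicate (\<alpha> i) i) xs)) g"
    for xs
    by (induct xs) (simp_all add: funpow_pdiff pdiffs_append)
  then show ?thesis
    by (simp add: Dalpha_def mi_list_def)
qed

lemma smooth_on_continuous_pdiffs: "smooth_on S f \<Longrightarrow> continuous_on S (pdiffs l f)"
  by (simp add: smooth_on_def)

lemma has_vector_derivative_line_shift:
  fixes H :: "'a::real_normed_vector \<Rightarrow> 'b::real_normed_vector"
  assumes "((\<lambda>t. H ((w + t0 *\<^sub>R v) + t *\<^sub>R v)) has_vector_derivative D) (at 0)"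
  shows "((\<lambda>t. H (w + t *\<^sub>R v)) has_vector_derivative D) (at t0)"
proof -
  have "((\<lambda>t. t - t0) has_vector_derivative 1) (at t0)"
    by (auto intro!: derivative_eq_intros)
  moreover have "((\<lambda>t. H ((w + t0 *\<^sub>R v) + t *\<^sub>R v)) has_vector_derivative D) (at (t0 - t0))"
    using assms by simp
  ultimately have "((\<lambda>t. H ((w + t0 *\<^sub>R v) + (t - t0) *\<^sub>R v)) has_vector_derivative D) (at t0)"
    using vector_diff_chain_at by (fastforce simp: o_def)
  then show ?thesis
    by (simp add: algebra_simps)
qed

lemma smooth_on_has_vector_derivative_pdiffs:
  assumes "smooth_on S f" "x + t *\<^sub>R axis i 1 \<in> S"
  shows "((\<lambda>t. pdiffs l f (x + t *\<^sub>R axis i 1)) has_vector_derivative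
           pdiffs (i # l) f (x + t *\<^sub>R axis i 1)) (at t)"
  by (rule has_vector_derivative_line_shift) (use assms in \<open>simp add: smooth_on_def\<close>)

lemma norm_le_componentwise:
  fixes x y :: "real^'n::finite"
  assumes "\<And>k. \<bar>x $ k\<bar> \<le> \<bar>y $ k\<bar>"
  shows "norm x \<le> norm y"
  unfolding norm_vec_def by (rule L2_set_mono) (use assms in auto)

lemma norm_increment_sub_linear_le:
  fixes g :: "real \<Rightarrow> 'b::real_normed_vector"
  assumes der: "\<And>t. t \<in> closed_segment 0 a \<Longrightarrow> (g has_vector_derivative g' t) (at t)"
    and close: "\<And>t. t \<in> closed_segment 0 a \<Longrightarrow> norm (g' t - d) \<le> \<epsilon>"
  shows "norm (g a - g 0 - a *\<^sub>R d) \<le> \<epsilon> * \<bar>a\<bar>"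
proof -
  have "norm ((g a - a *\<^sub>R d) - (g 0 - 0 *\<^sub>R d)) \<le> \<epsilon> * norm (a - 0)"
  proof (rule differentiable_bound[where f' = "\<lambda>t u. u *\<^sub>R (g' t - d)"])
    fix t assume t: "t \<in> closed_segment 0 a"
    have "((\<lambda>t. g t - t *\<^sub>R d) has_vector_derivative g' t - d) (at t)"
      using der[OF t] by (auto intro!: derivative_eq_intros)
    then show "((\<lambda>t. g t - t *\<^sub>R d) has_derivative (\<lambda>u. u *\<^sub>R (g' t - d))) (at t within closed_segment 0 a)"
      by (simp add: has_vector_derivative_def has_derivative_at_withinI)
    have "onorm (\<lambda>u::real. u *\<^sub>R (g' t - d)) = norm (g' t - d)"
      using onorm_scaleR_left[OF bounded_linear_ident] by (simp add: onorm_id)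
    then show "onorm (\<lambda>u. u *\<^sub>R (g' t - d)) \<le> \<epsilon>"
      using close[OF t] by simp
  qed auto
  then show ?thesis
    by (simp add: algebra_simps)
qed

lemma norm_increment_le_partials:
  fixes H :: "real^'n::finite \<Rightarrow> 'b::real_normed_vector"
  assumes der: "\<And>i w. \<forall>k. \<bar>(w - z) $ k\<bar> \<le> \<bar>h $ k\<bar> \<Longrightarrow>
      ((\<lambda>t. H (w + t *\<^sub>R axis i 1)) has_vector_derivative D i w) (at 0)"
    and close: "\<And>i w. \<forall>k. \<bar>(w - z) $ k\<bar> \<le> \<bar>h $ k\<bar> \<Longrightarrow> norm (D i w - D i z) \<le> \<epsilon>"
  shows "norm (H (z + h) - H z - (\<Sum>i\<in>UNIV. h $ i *\<^sub>R D i z)) \<le> \<epsilon> * (\<Sum>i\<in>UNIV. \<bar>h $ i\<bar>)"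
proof -
  define hA where "hA A = (\<Sum>i\<in>A. h $ i *\<^sub>R axis i (1::real))" for A
  have hA_nth: "hA A $ k = (if k \<in> A then h $ k else 0)" if "finite A" for A k
    using that by (simp add: hA_def sum_component axis_def if_distrib cong: if_cong)
  \<comment> \<open>Change one coordinate at a time; every intermediate point stays in the box spanned by h.\<close>
  have "norm (H (z + hA A) - H z - (\<Sum>i\<in>A. h $ i *\<^sub>R D i z)) \<le> \<epsilon> * (\<Sum>i\<in>A. \<bar>h $ i\<bar>)"
    if "finite A" for A
    using that
  proof (induction A rule: finite_induct)
    case empty
    then show ?case by (simp add: hA_def)
  next
    case (insert j A)
    define w where "w = z + hA A"
    have edge: "\<forall>k. \<bar>(w + t *\<^sub>R axis j 1 - z) $ k\<bar> \<le> \<bar>h $ k\<bar>" if "t \<in> closed_segment 0 (h $ j)" for t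
      using that insert(2) by (auto simp: w_def hA_nth[OF insert(1)] axis_def closed_segment_eq_real_ivl
          split: if_splits)
    have "norm (H (w + h $ j *\<^sub>R axis j 1) - H (w + 0 *\<^sub>R axis j 1) - h $ j *\<^sub>R D j z) \<le> \<epsilon> * \<bar>h $ j\<bar>"
      by (rule norm_increment_sub_linear_le[where g' = "\<lambda>t. D j (w + t *\<^sub>R axis j 1)"])
         (use der[OF edge] close[OF edge] in \<open>auto intro: has_vector_derivative_line_shift\<close>)
    moreover have "hA (insert j A) = hA A + h $ j *\<^sub>R axis j 1"
      using insert by (simp add: hA_def)
    ultimately have step: "norm (H (z + hA (insert j A)) - H (z + hA A) - h $ j *\<^sub>R D j z)
        \<le> \<epsilon> * \<bar>h $ j\<bar>"
      by (simp add: w_def add.assoc)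
    show ?case
      using insert norm_triangle_le[OF add_mono[OF step insert(3)]]
      by (simp add: algebra_simps)
  qed
  moreover have "hA UNIV = h"
    by (simp add: vec_eq_iff hA_nth)
  ultimately show ?thesis
    by (metis finite)
qed

lemma has_derivative_continuous_partials:
  fixes H :: "real^'n::finite \<Rightarrow> 'b::real_normed_vector"
  assumes S: "open S" "z \<in> S"
    and der: "\<And>i w. w \<in> S \<Longrightarrow> ((\<lambda>t. H (w + t *\<^sub>R axis i 1)) has_vector_derivative D i w) (at 0)"
    and cont: "\<And>i. continuous_on S (D i)"
  shows "(H has_derivative (\<lambda>h. \<Sum>i\<in>UNIV. h $ i *\<^sub>R D i z)) (at z)"
  unfolding has_derivative_at_alt
proof (intro conjI allI impI)
  show "bounded_linear (\<lambda>h. \<Sum>i\<in>UNIV. h $ i *\<^sub>R D i z)"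
    by (intro bounded_linear_intros bounded_linear_vec_nth)
  fix e :: real assume e: "e > 0"
  define e' where "e' = e / real CARD('n)"
  have "\<forall>\<^sub>F w in nhds z. w \<in> S \<and> (\<forall>i. dist (D i w) (D i z) < e')"
  proof -
    have "isCont (D i) z" for i
      using continuous_on_interior[OF cont] S by (simp add: interior_open)
    then have "\<forall>\<^sub>F w in nhds z. dist (D i w) (D i z) < e'" for i
      using e by (simp add: e'_def isCont_def tendsto_at_iff_tendsto_nhds[symmetric] tendstoD)
    then show ?thesis
      using eventually_nhds_in_open[OF S] by (intro eventually_conj eventually_all_finite) auto
  qed
  then obtain d where d: "d > 0" "\<And>w. dist w z < d \<Longrightarrow> w \<in> S \<and> (\<forall>i. dist (D i w) (D i z) < e')"
    unfolding eventually_nhds_metric by (auto simp: dist_commute)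
  show "\<exists>d>0. \<forall>y. norm (y - z) < d \<longrightarrow>
      norm (H y - H z - (\<Sum>i\<in>UNIV. (y - z) $ i *\<^sub>R D i z)) \<le> e * norm (y - z)"
  proof (intro exI[of _ d] conjI allI impI d)
    fix y assume y: "norm (y - z) < d"
    have near: "w \<in> S \<and> (\<forall>i. dist (D i w) (D i z) < e')" if "\<forall>k. \<bar>(w - z) $ k\<bar> \<le> \<bar>(y - z) $ k\<bar>" for w
      using d(2) norm_le_componentwise[of "w - z" "y - z"] that y by (simp add: dist_norm)
    have "norm (H (z + (y - z)) - H z - (\<Sum>i\<in>UNIV. (y - z) $ i *\<^sub>R D i z))
        \<le> e' * (\<Sum>i\<in>UNIV. \<bar>(y - z) $ i\<bar>)"
      by (rule norm_increment_le_partials) (use near der in \<open>auto simp: dist_norm less_imp_le\<close>)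
    also have "\<dots> \<le> e' * (\<Sum>i\<in>(UNIV::'n set). norm (y - z))"
      using e by (intro mult_left_mono sum_mono component_le_norm_cart) (auto simp: e'_def)
    also have "\<dots> = e * norm (y - z)"
      by (simp add: e'_def)
    finally show "norm (H y - H z - (\<Sum>i\<in>UNIV. (y - z) $ i *\<^sub>R D i z)) \<le> e * norm (y - z)"
      by simp
  qed
qed

lemma has_vector_derivative_pdiffs_line:
  assumes sm: "smooth_on \<Omega> f" and "open \<Omega>" and xt: "x + t *\<^sub>R v \<in> \<Omega>"
  shows "((\<lambda>t. pdiffs l f (x + t *\<^sub>R v)) has_vector_derivative
          (\<Sum>i\<in>UNIV. v $ i *\<^sub>R pdiffs (i # l) f (x + t *\<^sub>R v))) (at t within T)"
proof -
  have L: "((\<lambda>t. x + t *\<^sub>R v) has_derivative (\<lambda>u. u *\<^sub>R v)) (at t within T)"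
    by (auto intro!: derivative_eq_intros)
  have "(pdiffs l f has_derivative (\<lambda>h. \<Sum>i\<in>UNIV. h $ i *\<^sub>R pdiffs (i # l) f (x + t *\<^sub>R v)))
      (at (x + t *\<^sub>R v))"
    by (rule has_derivative_continuous_partials[OF \<open>open \<Omega>\<close> xt])
       (use sm smooth_on_continuous_pdiffs[OF sm, of "_ # l"] in \<open>auto simp: smooth_on_def\<close>)
  from has_derivative_compose[OF L this] show ?thesis
    by (simp add: has_vector_derivative_def scaleR_sum_right)
qed

lemma card_lists_length_eq_UNIV: "card {l :: 'n::finite list. length l = k} = CARD('n) ^ k"
  using card_lists_length_eq[of "UNIV :: 'n set" k] by simp

lemma sum_lists_length_Suc:
  "(\<Sum>l | length l = Suc k. g l) = (\<Sum>l | length l = k. \<Sum>i\<in>(UNIV::'n::finite set). g (i # l))"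
proof -
  have "{l. length l = Suc k} = (\<lambda>(l, i). i # l) ` ({l :: 'n list. length l = k} \<times> UNIV)"
    using lists_length_Suc_eq[of "UNIV :: 'n set" k] by simp
  moreover have "inj_on (\<lambda>(l, i :: 'n). i # l) ({l. length l = k} \<times> UNIV)"
    by (auto simp: inj_on_def)
  ultimately show ?thesis
    by (simp add: sum.reindex sum.cartesian_product finite_list_length split_def)
qed

definition coord_prod :: "real^'n \<Rightarrow> 'n list \<Rightarrow> real" where
  "coord_prod v l = prod_list (map (\<lambda>j. v $ j) l)"

lemma coord_prod_Nil [simp]: "coord_prod v [] = 1"
  and coord_prod_Cons [simp]: "coord_prod v (i # l) = v $ i * coord_prod v l"
  by (simp_all add: coord_prod_def)

lemma abs_coord_prod_le: "\<bar>coord_prod v l\<bar> \<le> norm v ^ length l"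
  by (induct l) (auto simp: abs_mult intro!: mult_mono component_le_norm_cart)

lemma coord_prod_uminus: "coord_prod (- v) l = (- 1) ^ length l * coord_prod v l"
  by (induct l) auto

lemma coord_prod_eq_mono_pow: "coord_prod v l = mono_pow v (count_list l)"
proof (induct l)
  case Nil
  then show ?case by (simp add: mono_pow_def)
next
  case (Cons a l)
  have "mono_pow v (count_list (a # l)) = (\<Prod>i\<in>UNIV. (if i = a then v $ i else 1) * v $ i ^ count_list l i)"
    unfolding mono_pow_def by (intro prod.cong) auto
  also have "\<dots> = v $ a * mono_pow v (count_list l)"
    by (simp add: prod.distrib mono_pow_def)
  also have "\<dots> = coord_prod v (a # l)"
    using Cons by simp
  finally show ?case
    by (rule sym)
qed

lemma mi_abs_count_list: "mi_abs (count_list (l :: 'n::finite list)) = length l"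
  unfolding mi_abs_def by (rule sum_count_set) auto

lemma continuous_on_coord_prod: "continuous_on S (\<lambda>v. coord_prod v l)"
  by (induct l) (auto intro!: continuous_intros)

text \<open>The k-th derivative of \<open>t \<mapsto> pdiffs l0 f (x + t v)\<close>, expanded by the chain rule.\<close>

definition line_deriv :: "(real^'n::finite \<Rightarrow> complex) \<Rightarrow> 'n list \<Rightarrow> real^'n \<Rightarrow> real^'n \<Rightarrow> nat \<Rightarrow> real \<Rightarrow> complex"
  where "line_deriv f l0 x v k t = (\<Sum>l | length l = k. coord_prod v l *\<^sub>R pdiffs (l @ l0) f (x + t *\<^sub>R v))"

lemma line_deriv_0: "line_deriv f l0 x v 0 t = pdiffs l0 f (x + t *\<^sub>R v)"
  by (simp add: line_deriv_def)

lemma has_vector_derivative_line_deriv: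
  assumes sm: "smooth_on \<Omega> f" and "open \<Omega>" and xt: "x + t *\<^sub>R v \<in> \<Omega>"
  shows "(line_deriv f l0 x v k has_vector_derivative line_deriv f l0 x v (Suc k) t) (at t within T)"
proof -
  have "(line_deriv f l0 x v k has_vector_derivative
     (\<Sum>l | length l = k. coord_prod v l *\<^sub>R (\<Sum>i\<in>UNIV. v $ i *\<^sub>R pdiffs (i # l @ l0) f (x + t *\<^sub>R v))))
     (at t within T)"
    unfolding line_deriv_def
    by (intro has_vector_derivative_sum bounded_linear.has_vector_derivative[OF bounded_linear_scaleR_right]
        has_vector_derivative_pdiffs_line[OF sm \<open>open \<Omega>\<close> xt])
  also have "(\<Sum>l | length l = k. coord_prod v l *\<^sub>R (\<Sum>i\<in>UNIV. v $ i *\<^sub>R pdiffs (i # l @ l0) f (x + t *\<^sub>R v)))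
      = line_deriv f l0 x v (Suc k) t"
    unfolding line_deriv_def sum_lists_length_Suc by (simp add: scaleR_sum_right mult.commute)
  finally show ?thesis .
qed

lemma norm_line_deriv_le:
  fixes x v :: "real^'n::finite"
  assumes "\<And>l. length l = k \<Longrightarrow> norm (pdiffs (l @ l0) f (x + t *\<^sub>R v)) \<le> B"
  shows "norm (line_deriv f l0 x v k t) \<le> real CARD('n) ^ k * B * norm v ^ k"
proof -
  have "norm (line_deriv f l0 x v k t)
      \<le> (\<Sum>l | length l = k. norm (coord_prod v l *\<^sub>R pdiffs (l @ l0) f (x + t *\<^sub>R v)))"
    unfolding line_deriv_def by (rule norm_sum)
  also have "\<dots> \<le> (\<Sum>l \<in> {l :: 'n list. length l = k}. norm v ^ k * B)"
  proof (intro sum_mono)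
    fix l :: "'n list" assume "l \<in> {l. length l = k}"
    then show "norm (coord_prod v l *\<^sub>R pdiffs (l @ l0) f (x + t *\<^sub>R v)) \<le> norm v ^ k * B"
      using assms[of l] abs_coord_prod_le[of v l] unfolding norm_scaleR by (auto intro!: mult_mono)
  qed
  also have "\<dots> = real CARD('n) ^ k * B * norm v ^ k"
    by (simp add: card_lists_length_eq_UNIV)
  finally show ?thesis .
qed

lemma norm_taylor_remainder_line_deriv_le:
  fixes x v :: "real^'n::finite"
  assumes sm: "smooth_on \<Omega> f" and "open \<Omega>"
    and seg: "\<And>t. t \<in> {0..1} \<Longrightarrow> x + t *\<^sub>R v \<in> \<Omega>"
    and "0 \<le> B"
    and B: "\<And>l t. length l = Suc p \<Longrightarrow> t \<in> {0..1} \<Longrightarrow> norm (pdiffs (l @ l0) f (x + t *\<^sub>R v)) \<le> B"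
  shows "norm (pdiffs l0 f (x + v) - (\<Sum>k\<le>p. (1 / fact k) *\<^sub>R line_deriv f l0 x v k 0))
          \<le> real CARD('n) ^ Suc p * B * norm v ^ Suc p"
proof -
  have "((\<lambda>t. ((1 - t) ^ (Suc p - 1) / fact (Suc p - 1)) *\<^sub>R line_deriv f l0 x v (Suc p) t) has_integral
      pdiffs l0 f (x + 1 *\<^sub>R v) - (\<Sum>i<Suc p. ((1 - 0) ^ i / fact i) *\<^sub>R line_deriv f l0 x v i 0)) {0..1}"
    by (rule Taylor_has_integral)
       (auto simp: line_deriv_0 fun_eq_iff intro!: has_vector_derivative_line_deriv[OF sm \<open>open \<Omega>\<close>] seg)
  then have I: "((\<lambda>t. ((1 - t) ^ p / fact p) *\<^sub>R line_deriv f l0 x v (Suc p) t) has_integral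
      pdiffs l0 f (x + v) - (\<Sum>k\<le>p. (1 / fact k) *\<^sub>R line_deriv f l0 x v k 0)) (cbox 0 1)"
    by (simp add: cbox_interval lessThan_Suc_atMost)
  have "norm (((1 - t) ^ p / fact p) *\<^sub>R line_deriv f l0 x v (Suc p) t)
      \<le> real CARD('n) ^ Suc p * B * norm v ^ Suc p" if t: "t \<in> cbox 0 1" for t
  proof -
    have "\<bar>(1 - t) ^ p / fact p\<bar> \<le> 1"
      using t by (auto simp: cbox_interval divide_le_eq_1 power_le_one order.trans[OF _ fact_ge_1])
    moreover have "norm (line_deriv f l0 x v (Suc p) t) \<le> real CARD('n) ^ Suc p * B * norm v ^ Suc p"
      using t by (intro norm_line_deriv_le B) (auto simp: cbox_interval)
    ultimately show ?thesis
      unfolding norm_scaleR by (meson abs_ge_zero mult_left_le_one_le norm_ge_zero order_trans)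
  qed
  from has_integral_bound[OF _ I this] show ?thesis
    using \<open>0 \<le> B\<close> by simp
qed

lemma lebesgue_integral_indicator_cbox:
  fixes g :: "real^'n::finite \<Rightarrow> 'b::euclidean_space"
  assumes "continuous_on (cbox a b) g"
  shows "integral\<^sup>L lborel (\<lambda>s. indicator (cbox a b) s *\<^sub>R g s) = integral (cbox a b) g"
proof -
  have "integrable lborel (\<lambda>s. indicator (cbox a b) s *\<^sub>R g s)"
    by (rule borel_integrable_compact) (auto simp: assms)
  then have "integral\<^sup>L lborel (\<lambda>s. indicator (cbox a b) s *\<^sub>R g s)
      = integral UNIV (\<lambda>s. indicator (cbox a b) s *\<^sub>R g s)"
    by (rule integral_lborel[symmetric])
  also have "\<dots> = integral UNIV (\<lambda>s. if s \<in> cbox a b then g s else 0)"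
    by (rule arg_cong[where f = "integral UNIV"]) (auto simp: indicator_def)
  also have "\<dots> = integral (cbox a b) g"
    by (rule integral_restrict_UNIV)
  finally show ?thesis .
qed

lemma lebesgue_integral_eq_integral_cbox:
  fixes g :: "real^'n::finite \<Rightarrow> 'b::euclidean_space"
  assumes "continuous_on (cbox a b) g" "\<And>s. s \<notin> cbox a b \<Longrightarrow> g s = 0"
  shows "integral\<^sup>L lborel g = integral (cbox a b) g"
proof -
  have "g = (\<lambda>s. indicator (cbox a b) s *\<^sub>R g s)"
    using assms(2) by (auto simp: indicator_def fun_eq_iff)
  then show ?thesis
    using lebesgue_integral_indicator_cbox[OF assms(1)] by metis
qed

lemma integral_cbox_reflect_translate:
  fixes g :: "real^'n::finite \<Rightarrow> 'b::banach"
  assumes "g integrable_on cbox (y - c) (y + c)"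
  shows "integral (cbox (y - c) (y + c)) g = integral (cbox (- c) c) (\<lambda>s. g (y - s))"
proof -
  obtain i where i: "(g has_integral i) (cbox (y - c) (y + c))"
    using assms by blast
  have "((\<lambda>x. g (1 *\<^sub>R x + y)) has_integral i /\<^sub>R 1 ^ DIM(real^'n))
      (cbox ((y - c - y) /\<^sub>R 1) ((y + c - y) /\<^sub>R 1))"
    by (rule has_integral_affinity'[OF i]) simp
  then have "((\<lambda>x. g (x + y)) has_integral i) (cbox (- c) (- (- c)))"
    by simp
  then have "((\<lambda>s. g (y - s)) has_integral i) (cbox (- c) c)"
    by (subst (asm) has_integral_reflect[symmetric]) (simp add: algebra_simps)
  then show ?thesis
    using i by (simp add: integral_unique)
qed

lemma mem_cbox_uniform_iff:
  fixes s :: "real^'n::finite"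
  shows "s \<in> cbox (- (\<chi> i. R)) (\<chi> i. R) \<longleftrightarrow> (\<forall>i. \<bar>s $ i\<bar> \<le> R)"
  by (simp add: mem_box_cart abs_le_iff) (meson minus_le_iff)

lemma mem_cbox_uniform_if_norm_le:
  fixes s :: "real^'n::finite"
  assumes "norm s \<le> R"
  shows "s \<in> cbox (- (\<chi> i. R)) (\<chi> i. R)"
  using component_le_norm_cart[of s] assms by (auto simp: mem_cbox_uniform_iff intro: order_trans)

lemma norm_le_if_mem_cbox_uniform:
  fixes s :: "real^'n::finite"
  assumes "s \<in> cbox (- (\<chi> i. R)) (\<chi> i. R)"
  shows "norm s \<le> real CARD('n) * R"
proof -
  have "norm s \<le> (\<Sum>i\<in>UNIV. \<bar>s $ i\<bar>)"
    by (rule norm_le_l1_cart)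
  also have "\<dots> \<le> (\<Sum>i\<in>(UNIV::'n set). R)"
    using assms by (intro sum_mono) (simp add: mem_cbox_uniform_iff)
  finally show ?thesis
    by simp
qed

lemma mem_cbox_translate_iff: "t \<in> cbox (y - c) (y + c) \<longleftrightarrow> y - t \<in> cbox (- c) (c :: real^'n::finite)"
  by (auto simp: mem_box_cart algebra_simps)

lemma pdiff_cong_open:
  assumes "open V" "y \<in> V" and eq: "\<And>z. z \<in> V \<Longrightarrow> g z = h z"
  shows "pdiff i g y = pdiff i h y"
proof -
  let ?S = "{t::real. y + t *\<^sub>R axis i 1 \<in> V}"
  have "open ?S"
    by (rule open_vimage[OF \<open>open V\<close>, of "\<lambda>t. y + t *\<^sub>R axis i 1", unfolded vimage_def])
       (intro continuous_intros)
  then have S: "open ?S" "0 \<in> ?S"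
    using \<open>y \<in> V\<close> by simp_all
  have "((\<lambda>t. g (y + t *\<^sub>R axis i 1)) has_vector_derivative D) (at 0) \<longleftrightarrow>
        ((\<lambda>t. h (y + t *\<^sub>R axis i 1)) has_vector_derivative D) (at 0)" for D
    using has_vector_derivative_transform_within_open[OF _ S, of "\<lambda>t. g (y + t *\<^sub>R axis i 1)" D
        "\<lambda>t. h (y + t *\<^sub>R axis i 1)"]
      has_vector_derivative_transform_within_open[OF _ S, of "\<lambda>t. h (y + t *\<^sub>R axis i 1)" D
        "\<lambda>t. g (y + t *\<^sub>R axis i 1)"] eq
    by auto
  then show ?thesis
    unfolding pdiff_def vector_derivative_def by simp
qed

lemma pdiff_integral_convolution:
  fixes f \<phi> :: "real^'n::finite \<Rightarrow> complex"
  assumes sm: "smooth_on \<Omega> f" and c\<phi>: "continuous_on UNIV \<phi>" and "\<eta> > 0"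
    and dom: "\<And>\<tau> s. \<bar>\<tau>\<bar> < \<eta> \<Longrightarrow> s \<in> cbox a b \<Longrightarrow> y + \<tau> *\<^sub>R axis i 1 - s \<in> \<Omega>"
  shows "pdiff i (\<lambda>y. integral (cbox a b) (\<lambda>s. pdiffs l f (y - s) * \<phi> s)) y
       = integral (cbox a b) (\<lambda>s. pdiffs (i # l) f (y - s) * \<phi> s)"
proof -
  let ?e = "axis i (1::real) :: real^'n"
  define U where "U = ball (0::real) \<eta>"
  have U: "open U" "convex U" "0 \<in> U"
    using \<open>\<eta> > 0\<close> by (auto simp: U_def)
  have dom': "y + \<tau> *\<^sub>R ?e - s \<in> \<Omega>" if "\<tau> \<in> U" "s \<in> cbox a b" for \<tau> s
    using dom that by (auto simp: U_def)
  have "((\<lambda>\<tau>. integral (cbox a b) (\<lambda>s. pdiffs l f (y + \<tau> *\<^sub>R ?e - s) * \<phi> s)) has_vector_derivative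
        integral (cbox a b) (\<lambda>s. pdiffs (i # l) f (y + 0 *\<^sub>R ?e - s) * \<phi> s)) (at 0 within U)"
  proof (rule leibniz_rule_vector_derivative[where fx = "\<lambda>\<tau> s. pdiffs (i # l) f (y + \<tau> *\<^sub>R ?e - s) * \<phi> s"])
    fix \<tau> s assume \<tau>: "\<tau> \<in> U" and s: "s \<in> cbox a b"
    have "((\<lambda>t. pdiffs l f ((y - s) + t *\<^sub>R ?e)) has_vector_derivative
        pdiffs (i # l) f ((y - s) + \<tau> *\<^sub>R ?e)) (at \<tau>)"
      by (rule smooth_on_has_vector_derivative_pdiffs[OF sm]) (use dom'[OF \<tau> s] in \<open>simp add: algebra_simps\<close>)
    from has_vector_derivative_mult_left[OF this, of "\<phi> s"]
    have "((\<lambda>t. pdiffs l f (y + t *\<^sub>R ?e - s) * \<phi> s) has_vector_derivative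
        pdiffs (i # l) f (y + \<tau> *\<^sub>R ?e - s) * \<phi> s) (at \<tau>)"
      by (simp add: algebra_simps)
    then show "((\<lambda>\<tau>. pdiffs l f (y + \<tau> *\<^sub>R ?e - s) * \<phi> s) has_vector_derivative
        pdiffs (i # l) f (y + \<tau> *\<^sub>R ?e - s) * \<phi> s) (at \<tau> within U)"
      by (rule has_vector_derivative_at_within)
  next
    fix \<tau> assume \<tau>: "\<tau> \<in> U"
    have "continuous_on (cbox a b) (\<lambda>s. pdiffs l f (y + \<tau> *\<^sub>R ?e - s))"
      by (rule continuous_on_compose2[OF smooth_on_continuous_pdiffs[OF sm]])
         (use dom'[OF \<tau>] in \<open>auto intro!: continuous_intros\<close>)
    then show "(\<lambda>s. pdiffs l f (y + \<tau> *\<^sub>R ?e - s) * \<phi> s) integrable_on cbox a b"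
      by (intro integrable_continuous continuous_intros continuous_on_subset[OF c\<phi>]) auto
  next
    have "continuous_on (U \<times> cbox a b) (\<lambda>p. pdiffs (i # l) f (y + fst p *\<^sub>R ?e - snd p))"
      by (rule continuous_on_compose2[OF smooth_on_continuous_pdiffs[OF sm]])
         (use dom' in \<open>auto intro!: continuous_intros\<close>)
    moreover have "continuous_on (U \<times> cbox a b) (\<lambda>p. \<phi> (snd p))"
      by (rule continuous_on_compose2[OF c\<phi>]) (auto intro!: continuous_intros)
    ultimately show "continuous_on (U \<times> cbox a b) (\<lambda>(\<tau>, s). pdiffs (i # l) f (y + \<tau> *\<^sub>R ?e - s) * \<phi> s)"
      by (simp add: split_def continuous_on_mult)
  qed (use U in auto)
  then show ?thesis
    unfolding pdiff_def using at_within_open[OF U(3,1)] by (simp add: vector_derivative_at)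
qed

lemma C_Omega_eq_1:
  fixes \<phi> :: "real^'n::finite \<Rightarrow> complex"
  assumes c\<phi>: "continuous_on UNIV \<phi>"
    and supp: "\<And>s. \<phi> s \<noteq> 0 \<Longrightarrow> norm s \<le> R"
    and c: "c = (\<chi> i. R)"
    and int1: "integral (cbox (- c) c) \<phi> = 1"
    and tild: "cball y (2 * R) \<subseteq> Omega_tilde \<Omega> \<phi>"
    and t: "norm (y - t) \<le> R"
  shows "C_Omega \<Omega> \<phi> t = 1"
proof -
  have eq: "indicator (Omega_tilde \<Omega> \<phi>) s *\<^sub>R \<phi> (t - s) = indicator (cbox (t - c) (t + c)) s *\<^sub>R \<phi> (t - s)"
    for s
  proof (cases "\<phi> (t - s) = 0")
    case False
    then have ts: "norm (t - s) \<le> R"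
      using supp by blast
    then have "dist y s \<le> 2 * R"
      using t norm_triangle_ineq[of "y - t" "t - s"] by (simp add: dist_norm)
    then show ?thesis
      using tild mem_cbox_uniform_if_norm_le[OF ts] by (auto simp: c mem_cbox_translate_iff)
  qed simp
  have "C_Omega \<Omega> \<phi> t = integral\<^sup>L lborel (\<lambda>s. indicator (cbox (t - c) (t + c)) s *\<^sub>R \<phi> (t - s))"
    unfolding C_Omega_def set_lebesgue_integral_def eq ..
  also have "\<dots> = integral (cbox (t - c) (t + c)) (\<lambda>s. \<phi> (t - s))"
    by (rule lebesgue_integral_indicator_cbox) (intro continuous_on_compose2[OF c\<phi>] continuous_intros; simp)
  also have "\<dots> = integral (cbox (- c) c) (\<lambda>u. \<phi> (t - (t - u)))"
    by (intro integral_cbox_reflect_translate integrable_continuous continuous_on_compose2[OF c\<phi>]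
        continuous_intros) simp
  finally show ?thesis
    using int1 by simp
qed

lemma conv_Omega_eq_integral_cbox:
  fixes f \<phi> :: "real^'n::finite \<Rightarrow> complex"
  assumes sm: "smooth_on \<Omega> f" and c\<phi>: "continuous_on UNIV \<phi>"
    and supp: "\<And>s. \<phi> s \<noteq> 0 \<Longrightarrow> norm s \<le> R"
    and c: "c = (\<chi> i. R)"
    and int1: "integral (cbox (- c) c) \<phi> = 1"
    and box: "cbox (y - c) (y + c) \<subseteq> \<Omega>"
    and tild: "cball y (2 * R) \<subseteq> Omega_tilde \<Omega> \<phi>"
  shows "conv_Omega \<Omega> f \<phi> y = integral (cbox (- c) c) (\<lambda>s. f (y - s) * \<phi> s)"
proof -
  have eq: "indicator \<Omega> t *\<^sub>R (f t * C_Omega \<Omega> \<phi> t * \<phi> (y - t))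
      = indicator (cbox (y - c) (y + c)) t *\<^sub>R (f t * \<phi> (y - t))" for t
  proof (cases "\<phi> (y - t) = 0")
    case False
    then have yt: "norm (y - t) \<le> R"
      using supp by blast
    then show ?thesis
      using C_Omega_eq_1[OF c\<phi> supp c int1 tild yt] box mem_cbox_uniform_if_norm_le[OF yt]
      by (auto simp: c mem_cbox_translate_iff)
  qed simp
  have "conv_Omega \<Omega> f \<phi> y
      = integral\<^sup>L lborel (\<lambda>t. indicator (cbox (y - c) (y + c)) t *\<^sub>R (f t * \<phi> (y - t)))"
    unfolding conv_Omega_def set_lebesgue_integral_def eq ..
  moreover have cont: "continuous_on (cbox (y - c) (y + c)) (\<lambda>t. f t * \<phi> (y - t))"
    using smooth_on_continuous_pdiffs[OF sm, of "[]"] box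
    by (intro continuous_on_mult continuous_on_compose2[OF c\<phi>])
       (auto intro!: continuous_intros intro: continuous_on_subset)
  ultimately show ?thesis
    using lebesgue_integral_indicator_cbox[OF cont]
      integral_cbox_reflect_translate[OF integrable_continuous[OF cont]]
    by simp
qed

lemma pdiffs_conv_Omega_eq_integral_cbox:
  fixes f \<phi> :: "real^'n::finite \<Rightarrow> complex"
  assumes sm: "smooth_on \<Omega> f" and c\<phi>: "continuous_on UNIV \<phi>"
    and supp: "\<And>s. \<phi> s \<noteq> 0 \<Longrightarrow> norm s \<le> R"
    and c: "c = (\<chi> i. R)"
    and int1: "integral (cbox (- c) c) \<phi> = 1"
    and "open V"
    and box: "\<And>y. y \<in> V \<Longrightarrow> cbox (y - c) (y + c) \<subseteq> \<Omega>"
    and tild: "\<And>y. y \<in> V \<Longrightarrow> cball y (2 * R) \<subseteq> Omega_tilde \<Omega> \<phi>"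
    and "y \<in> V"
  shows "pdiffs l (conv_Omega \<Omega> f \<phi>) y = integral (cbox (- c) c) (\<lambda>s. pdiffs l f (y - s) * \<phi> s)"
  using \<open>y \<in> V\<close>
proof (induction l arbitrary: y)
  case Nil
  then show ?case
    using conv_Omega_eq_integral_cbox[OF sm c\<phi> supp c int1 box tild] by simp
next
  case (Cons i l)
  obtain \<eta> where "\<eta> > 0" and "ball y \<eta> \<subseteq> V"
    using \<open>open V\<close> Cons.prems open_contains_ball by blast
  have "y + \<tau> *\<^sub>R axis i 1 - s \<in> \<Omega>" if "\<bar>\<tau>\<bar> < \<eta>" "s \<in> cbox (- c) c" for \<tau> s
  proof -
    have "y + \<tau> *\<^sub>R axis i 1 \<in> V"
      using \<open>ball y \<eta> \<subseteq> V\<close> that(1) by (auto simp: dist_norm)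
    moreover have "y + \<tau> *\<^sub>R axis i 1 - s \<in> cbox (y + \<tau> *\<^sub>R axis i 1 - c) (y + \<tau> *\<^sub>R axis i 1 + c)"
      using that(2) by (simp add: mem_cbox_translate_iff)
    ultimately show ?thesis
      using box by blast
  qed
  from pdiff_integral_convolution[OF sm c\<phi> \<open>\<eta> > 0\<close> this]
  show ?case
    using pdiff_cong_open[OF \<open>open V\<close> Cons.prems Cons.IH] by simp
qed

lemma integral_line_deriv_moments_vanish:
  fixes \<phi> :: "real^'n::finite \<Rightarrow> complex"
  assumes c\<phi>: "continuous_on (cbox a b) \<phi>"
    and mom: "\<And>\<beta>. 1 \<le> mi_abs \<beta> \<Longrightarrow> mi_abs \<beta> \<le> p \<Longrightarrow>
        integral (cbox a b) (\<lambda>s. complex_of_real (mono_pow s \<beta>) * \<phi> s) = 0"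
  shows "integral (cbox a b) (\<lambda>s. (\<Sum>k=1..p. (1 / fact k) *\<^sub>R line_deriv f l0 x (- s) k 0) * \<phi> s) = 0"
proof -
  have mono_int: "(\<lambda>s. complex_of_real (mono_pow s \<beta>) * \<phi> s) integrable_on cbox a b" for \<beta>
    by (intro integrable_continuous continuous_intros c\<phi>) (simp add: mono_pow_def continuous_intros)
  \<comment> \<open>The order-k term is a combination of moments of order k, with coefficients independent of s.\<close>
  have expand: "line_deriv f l0 x (- s) k 0 * \<phi> s = (\<Sum>l | length l = k.
      ((- 1) ^ k * pdiffs (l @ l0) f x) * (complex_of_real (mono_pow s (count_list l)) * \<phi> s))" for s k
    unfolding line_deriv_def sum_distrib_right
    by (intro sum.cong) (auto simp: coord_prod_uminus coord_prod_eq_mono_pow[of s] scaleR_conv_of_real)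
  have "integral (cbox a b) (\<lambda>s. line_deriv f l0 x (- s) k 0 * \<phi> s) = 0" if "k \<in> {1..p}" for k
  proof -
    have "integral (cbox a b) (\<lambda>s. line_deriv f l0 x (- s) k 0 * \<phi> s) = (\<Sum>l | length l = k.
        ((- 1) ^ k * pdiffs (l @ l0) f x) * integral (cbox a b) (\<lambda>s. complex_of_real (mono_pow s (count_list l)) * \<phi> s))"
      unfolding expand using mono_int by (simp add: integral_sum integrable_on_mult_right finite_list_length)
    also have "\<dots> = 0"
      using that mom by (intro sum.neutral) (simp add: mi_abs_count_list)
    finally show ?thesis .
  qed
  moreover have "(\<lambda>s. line_deriv f l0 x (- s) k 0 * \<phi> s) integrable_on cbox a b" for k
    unfolding expand using mono_int by (intro integrable_sum integrable_on_mult_right finite_list_length)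
  ultimately show ?thesis
    by (simp add: sum_distrib_right integral_sum integrable_cmul)
qed

lemma norm_convolution_sub_le:
  fixes f \<phi> :: "real^'n::finite \<Rightarrow> complex"
  assumes "open \<Omega>" and sm: "smooth_on \<Omega> f"
    and c\<phi>: "continuous_on (cbox (- c) c) \<phi>"
    and cube: "\<And>s. s \<in> cbox (- c) c \<Longrightarrow> norm s \<le> \<rho>"
    and ball: "cball x \<rho> \<subseteq> \<Omega>"
    and "0 \<le> B"
    and B: "\<And>l z. length l = Suc p \<Longrightarrow> z \<in> cball x \<rho> \<Longrightarrow> norm (pdiffs (l @ l0) f z) \<le> B"
    and supp: "\<And>s. \<phi> s \<noteq> 0 \<Longrightarrow> norm s \<le> R"
    and int1: "integral (cbox (- c) c) \<phi> = 1"
    and mom: "\<And>\<beta>. 1 \<le> mi_abs \<beta> \<Longrightarrow> mi_abs \<beta> \<le> p \<Longrightarrow>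
        integral (cbox (- c) c) (\<lambda>s. complex_of_real (mono_pow s \<beta>) * \<phi> s) = 0"
  shows "norm (integral (cbox (- c) c) (\<lambda>s. pdiffs l0 f (x - s) * \<phi> s) - pdiffs l0 f x)
    \<le> real CARD('n) ^ Suc p * B * R ^ Suc p * integral (cbox (- c) c) (\<lambda>s. norm (\<phi> s))"
proof -
  define Q where "Q = cbox (- c) c"
  define M where "M = real CARD('n) ^ Suc p * B"
  define T where "T s = (\<Sum>k\<le>p. (1 / fact k) *\<^sub>R line_deriv f l0 x (- s) k 0)" for s
  define Rem where "Rem s = pdiffs l0 f (x - s) - T s" for s
  have "x - s \<in> cball x \<rho>" if "s \<in> Q" for s
    using cube that by (simp add: Q_def dist_norm)
  then have cont_f: "continuous_on Q (\<lambda>s. pdiffs l0 f (x - s))"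
    using ball by (intro continuous_on_compose2[OF smooth_on_continuous_pdiffs[OF sm]] continuous_intros) auto
  have cont_T: "continuous_on Q T"
    unfolding T_def line_deriv_def
    by (intro continuous_intros continuous_on_compose2[OF continuous_on_coord_prod]) auto
  have int: "(\<lambda>s. g s * \<phi> s) integrable_on Q" if "continuous_on Q g" for g
    using that c\<phi> unfolding Q_def by (intro integrable_continuous continuous_on_mult)
  have T_0: "T s = pdiffs l0 f x + (\<Sum>k=1..p. (1 / fact k) *\<^sub>R line_deriv f l0 x (- s) k 0)" for s
    unfolding T_def atMost_atLeast0 by (simp add: sum.atLeast_Suc_atMost line_deriv_0)
  have int_Rem: "(\<lambda>s. Rem s * \<phi> s) integrable_on Q"
    unfolding Rem_def by (intro int continuous_on_diff cont_f cont_T)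
  have "integral Q (\<lambda>s. pdiffs l0 f (x - s) * \<phi> s) - pdiffs l0 f x
      = integral Q (\<lambda>s. pdiffs l0 f (x - s) * \<phi> s) - integral Q (\<lambda>s. pdiffs l0 f x * \<phi> s)"
    using int1 by (simp add: Q_def)
  also have "\<dots> = integral Q (\<lambda>s. pdiffs l0 f (x - s) * \<phi> s - pdiffs l0 f x * \<phi> s)"
    by (rule integral_diff[symmetric, OF int[OF cont_f] int[OF continuous_on_const]])
  also have "\<dots> = integral Q (\<lambda>s. Rem s * \<phi> s + (T s - pdiffs l0 f x) * \<phi> s)"
    by (simp add: Rem_def algebra_simps)
  also have "\<dots> = integral Q (\<lambda>s. Rem s * \<phi> s) + integral Q (\<lambda>s. (T s - pdiffs l0 f x) * \<phi> s)"
    by (intro integral_add int_Rem int continuous_intros cont_T)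
  also have "integral Q (\<lambda>s. (T s - pdiffs l0 f x) * \<phi> s) = 0"
    using integral_line_deriv_moments_vanish[OF c\<phi> mom] by (simp add: T_0 Q_def)
  finally have E: "integral Q (\<lambda>s. pdiffs l0 f (x - s) * \<phi> s) - pdiffs l0 f x = integral Q (\<lambda>s. Rem s * \<phi> s)"
    by simp
  have "norm (Rem s * \<phi> s) \<le> M * R ^ Suc p * norm (\<phi> s)" if "s \<in> Q" for s
  proof (cases "\<phi> s = 0")
    case False
    then have "norm s \<le> R"
      using supp by blast
    have "x + t *\<^sub>R (- s) \<in> cball x \<rho>" if "t \<in> {0..1}" for t
      using that cube[OF \<open>s \<in> Q\<close>[unfolded Q_def]] mult_left_le_one_le[of "norm s" t]
      by (auto simp: dist_norm)
    then have "norm (Rem s) \<le> M * norm (- s) ^ Suc p"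
      unfolding Rem_def T_def M_def using ball B
      by (intro order.trans[OF _ norm_taylor_remainder_line_deriv_le[OF sm \<open>open \<Omega>\<close> _ \<open>0 \<le> B\<close>]]) auto
    also have "\<dots> \<le> M * R ^ Suc p"
      using \<open>norm s \<le> R\<close> \<open>0 \<le> B\<close> by (intro mult_left_mono power_mono) (auto simp: M_def)
    finally show ?thesis
      unfolding norm_mult by (rule mult_right_mono) simp
  qed simp
  then have "norm (integral Q (\<lambda>s. Rem s * \<phi> s)) \<le> integral Q (\<lambda>s. M * R ^ Suc p * norm (\<phi> s))"
    using c\<phi> int[OF continuous_on_diff[OF cont_f cont_T]]
    by (intro integral_norm_bound_integral) (auto simp: Rem_def Q_def intro!: integrable_continuous continuous_intros)
  then show ?thesis
    using E by (simp add: Q_def M_def)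
qed

lemma continuous_on_D0: "\<phi> \<in> D0 \<Longrightarrow> continuous_on UNIV \<phi>"
  using smooth_on_continuous_pdiffs[of UNIV \<phi> "[]"] by (simp add: D0_def)

lemma norm_le_Rphi:
  assumes "\<phi> \<in> D0" "\<phi> s \<noteq> 0"
  shows "norm s \<le> Rphi \<phi>"
proof -
  obtain a where "\<And>x. \<phi> x \<noteq> 0 \<Longrightarrow> norm x \<le> a"
    using assms(1) by (auto simp: D0_def bounded_iff)
  then have "bdd_above {norm x | x. \<phi> x \<noteq> 0}"
    by (auto intro!: bdd_aboveI)
  then show ?thesis
    using assms(2) by (auto simp: Rphi_def intro!: cSup_upper)
qed

lemma Rphi_pos:
  assumes "\<phi> \<in> D0" "\<phi> \<noteq> (\<lambda>_. 0)"
  shows "0 < Rphi \<phi>"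
proof -
  obtain x0 where x0: "\<phi> x0 \<noteq> 0"
    using assms(2) by auto
  \<comment> \<open>Being continuous, \<open>\<phi>\<close> is nonzero at two distinct points, one of which has positive norm.\<close>
  have "continuous (at x0) \<phi>"
    using continuous_on_D0[OF assms(1)] by (simp add: continuous_on_eq_continuous_at)
  then obtain e where "e > 0" and e: "\<And>y. dist x0 y < e \<Longrightarrow> \<phi> y \<noteq> 0"
    using continuous_at_avoid[of x0 \<phi> 0] x0 by auto
  define y where "y = x0 + (e / 2) *\<^sub>R axis undefined 1"
  have "dist x0 y = e / 2"
    using \<open>e > 0\<close> by (simp add: y_def dist_norm)
  then have "\<phi> y \<noteq> 0" "x0 \<noteq> y"
    using \<open>e > 0\<close> e by auto
  then have "\<not> (norm x0 = 0 \<and> norm y = 0)"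
    by auto
  then have "0 < norm x0 + norm y"
    using norm_ge_zero[of x0] norm_ge_zero[of y] by linarith
  moreover have "norm x0 \<le> Rphi \<phi>" "norm y \<le> Rphi \<phi>"
    using norm_le_Rphi[OF assms(1)] x0 \<open>\<phi> y \<noteq> 0\<close> by auto
  ultimately show ?thesis
    by linarith
qed

lemma Dn_cube_integrals:
  fixes \<phi> :: "real^'n::{finite,linorder} \<Rightarrow> complex"
  assumes \<phi>: "\<phi> \<in> Dn n" and "n \<noteq> 0" and c: "c = (\<chi> i. Rphi \<phi>)"
  shows "integral (cbox (- c) c) \<phi> = 1"
    and "\<And>\<beta>. 1 \<le> mi_abs \<beta> \<Longrightarrow> mi_abs \<beta> \<le> n \<Longrightarrow>
        integral (cbox (- c) c) (\<lambda>s. complex_of_real (mono_pow s \<beta>) * \<phi> s) = 0"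
    and "integral (cbox (- c) c) (\<lambda>s. norm (\<phi> s)) \<le> 1 + 1 / real n"
proof -
  have D0: "\<phi> \<in> D0"
    using \<phi> \<open>n \<noteq> 0\<close> by (simp add: Dn_def)
  have "\<phi> s = 0" if "s \<notin> cbox (- c) c" for s
    using that norm_le_Rphi[OF D0, of s] mem_cbox_uniform_if_norm_le[of s "Rphi \<phi>"] by (auto simp: c)
  then have lint: "integral\<^sup>L lborel (\<lambda>s. g s * \<phi> s) = integral (cbox (- c) c) (\<lambda>s. g s * \<phi> s)"
    if "continuous_on UNIV g" for g :: "_ \<Rightarrow> complex"
    using that continuous_on_D0[OF D0]
    by (intro lebesgue_integral_eq_integral_cbox continuous_on_mult) (auto intro: continuous_on_subset)
  show "integral (cbox (- c) c) \<phi> = 1"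
    using \<phi> \<open>n \<noteq> 0\<close> lint[of "\<lambda>_. 1"] by (simp add: Dn_def)
  show "integral (cbox (- c) c) (\<lambda>s. complex_of_real (mono_pow s \<beta>) * \<phi> s) = 0"
    if "1 \<le> mi_abs \<beta>" "mi_abs \<beta> \<le> n" for \<beta>
  proof -
    have "continuous_on UNIV (\<lambda>s. complex_of_real (mono_pow s \<beta>))"
      unfolding mono_pow_def by (intro continuous_intros)
    moreover have "integral\<^sup>L lborel (\<lambda>s. complex_of_real (mono_pow s \<beta>) * \<phi> s) = 0"
      using \<phi> \<open>n \<noteq> 0\<close> that by (simp add: Dn_def)
    ultimately show ?thesis
      using lint by metis
  qed
  have "integral\<^sup>L lborel (\<lambda>s. norm (\<phi> s)) = integral (cbox (- c) c) (\<lambda>s. norm (\<phi> s))"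
    using \<open>\<And>s. s \<notin> cbox (- c) c \<Longrightarrow> \<phi> s = 0\<close> continuous_on_D0[OF D0]
    by (intro lebesgue_integral_eq_integral_cbox continuous_on_norm) (auto intro: continuous_on_subset)
  then show "integral (cbox (- c) c) (\<lambda>s. norm (\<phi> s)) \<le> 1 + 1 / real n"
    using \<phi> \<open>n \<noteq> 0\<close> by (simp add: Dn_def)
qed

lemma cball_subset_Omega_tilde:
  assumes "open \<Omega>" and ball: "ball y r \<subseteq> \<Omega>" and "4 * Rphi \<phi> < r"
    and "Rphi \<phi> * (norm y + 2 * Rphi \<phi>) < 1" and "0 < Rphi \<phi>"
  shows "cball y (2 * Rphi \<phi>) \<subseteq> Omega_tilde \<Omega> \<phi>"
proof
  fix s assume s: "s \<in> cball y (2 * Rphi \<phi>)"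
  then have "s \<in> ball y r"
    using assms(3,5) by simp
  have "2 * Rphi \<phi> < infdist s (frontier \<Omega>)" if ne: "frontier \<Omega> \<noteq> {}"
  proof -
    have "r - 2 * Rphi \<phi> \<le> dist s b" if "b \<in> frontier \<Omega>" for b
    proof -
      have "b \<notin> ball y r"
        using that ball \<open>open \<Omega>\<close> by (auto simp: frontier_def interior_open)
      then show ?thesis
        using s dist_triangle[of y b s] by (simp add: dist_commute)
    qed
    then have "r - 2 * Rphi \<phi> \<le> infdist s (frontier \<Omega>)"
      unfolding infdist_notempty[OF ne] by (intro cINF_greatest ne)
    then show ?thesis
      using assms(3) by linarith
  qed
  moreover have "Rphi \<phi> * norm s < 1"
  proof -
    have "norm s \<le> norm y + 2 * Rphi \<phi>"
      using s norm_triangle_ineq2[of s y] by (simp add: dist_norm norm_minus_commute)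
    then have "Rphi \<phi> * norm s \<le> Rphi \<phi> * (norm y + 2 * Rphi \<phi>)"
      using assms(5) by (simp add: mult_left_mono)
    then show ?thesis
      using assms(4) by linarith
  qed
  ultimately show "s \<in> Omega_tilde \<Omega> \<phi>"
    using \<open>s \<in> ball y r\<close> ball assms(5) by (auto simp: Omega_tilde_def pos_less_divide_eq mult.commute)
qed

lemma Dn_Rphi_bounds:
  assumes \<phi>: "\<phi> \<in> Dn n" and "n \<noteq> 0"
  shows "0 < Rphi \<phi>"
    and "\<And>X. X \<le> real n \<Longrightarrow> X * Rphi \<phi> \<le> 1"
    and "\<And>X. X < real n \<Longrightarrow> X * Rphi \<phi> < 1"
proof -
  have "\<phi> \<in> D0" "integral\<^sup>L lborel \<phi> = 1" and Rn: "Rphi \<phi> \<le> 1 / real n"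
    using \<phi> \<open>n \<noteq> 0\<close> by (simp_all add: Dn_def)
  then show R: "0 < Rphi \<phi>"
    by (intro Rphi_pos) auto
  have "real n * Rphi \<phi> \<le> 1"
    using Rn \<open>n \<noteq> 0\<close> by (simp add: field_simps)
  then show "X * Rphi \<phi> \<le> 1" if "X \<le> real n" for X
    using mult_right_mono[OF that, of "Rphi \<phi>"] R \<open>real n * Rphi \<phi> \<le> 1\<close> by linarith
  show "X * Rphi \<phi> < 1" if "X < real n" for X
    using mult_strict_right_mono[OF that R] \<open>real n * Rphi \<phi> \<le> 1\<close> by linarith
qed

lemma pdiffs_conv_Omega_near_compact:
  fixes f \<phi> :: "real^'n::finite \<Rightarrow> complex"
  assumes "open \<Omega>" and sm: "smooth_on \<Omega> f" and D0: "\<phi> \<in> D0" and R: "0 < Rphi \<phi>"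
    and c: "c = (\<chi> i. Rphi \<phi>)" and int1: "integral (cbox (- c) c) \<phi> = 1"
    and K\<delta>: "(\<Union>x\<in>K. ball x (2 * \<delta>)) \<subseteq> \<Omega>"
    and A: "\<And>x. x \<in> K \<Longrightarrow> norm x \<le> A"
    and small: "real CARD('n) * Rphi \<phi> < \<delta>" "4 * Rphi \<phi> < \<delta>" "Rphi \<phi> * (A + \<delta> + 2 * Rphi \<phi>) < 1"
    and "x \<in> K"
  shows "pdiffs l (conv_Omega \<Omega> f \<phi>) x = integral (cbox (- c) c) (\<lambda>s. pdiffs l f (x - s) * \<phi> s)"
proof -
  define V where "V = (\<Union>x\<in>K. ball x \<delta>)"
  have ball: "ball y \<delta> \<subseteq> \<Omega>" and norm_y: "norm y \<le> A + \<delta>" if "y \<in> V" for y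
  proof -
    obtain x0 where "x0 \<in> K" "dist x0 y < \<delta>"
      using \<open>y \<in> V\<close> by (auto simp: V_def)
    have "ball y \<delta> \<subseteq> ball x0 (2 * \<delta>)"
    proof
      fix z assume "z \<in> ball y \<delta>"
      then show "z \<in> ball x0 (2 * \<delta>)"
        using \<open>dist x0 y < \<delta>\<close> dist_triangle[of x0 z y] by simp
    qed
    then show "ball y \<delta> \<subseteq> \<Omega>"
      using K\<delta> \<open>x0 \<in> K\<close> by blast
    show "norm y \<le> A + \<delta>"
      using A[OF \<open>x0 \<in> K\<close>] \<open>dist x0 y < \<delta>\<close> norm_triangle_ineq2[of y x0]
      by (simp add: dist_norm norm_minus_commute)
  qed
  have "cbox (y - c) (y + c) \<subseteq> \<Omega>" if "y \<in> V" for y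
  proof
    fix t assume "t \<in> cbox (y - c) (y + c)"
    then have "norm (y - t) \<le> real CARD('n) * Rphi \<phi>"
      by (simp add: c mem_cbox_translate_iff norm_le_if_mem_cbox_uniform)
    then show "t \<in> \<Omega>"
      using ball[OF that] small(1) by (auto simp: dist_norm)
  qed
  moreover have "cball y (2 * Rphi \<phi>) \<subseteq> Omega_tilde \<Omega> \<phi>" if "y \<in> V" for y
  proof (rule cball_subset_Omega_tilde[OF \<open>open \<Omega>\<close> ball[OF that] small(2) _ R])
    show "Rphi \<phi> * (norm y + 2 * Rphi \<phi>) < 1"
    proof -
      have "Rphi \<phi> * (norm y + 2 * Rphi \<phi>) \<le> Rphi \<phi> * (A + \<delta> + 2 * Rphi \<phi>)"
        using norm_y[OF that] R by (intro mult_left_mono) auto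
      then show ?thesis
        using small(3) by linarith
    qed
  qed
  moreover have "open V" "x \<in> V"
    using \<open>x \<in> K\<close> small R by (auto simp: V_def open_UN intro!: bexI[of _ x])
  ultimately show ?thesis
    by (intro pdiffs_conv_Omega_eq_integral_cbox[OF sm continuous_on_D0[OF D0] norm_le_Rphi[OF D0] c int1])
qed

lemma Dn_Rphi_small:
  fixes \<phi> :: "real^'n::{finite,linorder} \<Rightarrow> complex"
  assumes \<phi>: "\<phi> \<in> Dn n" and "0 < \<delta>" "0 \<le> A"
    and n: "8 * real CARD('n) / \<delta> \<le> real n" "A + \<delta> + 2 < real n" "2 * M \<le> real n"
  shows "real CARD('n) * Rphi \<phi> < \<delta>" and "4 * Rphi \<phi> < \<delta>"
    and "Rphi \<phi> * (A + \<delta> + 2 * Rphi \<phi>) < 1" and "2 * M * Rphi \<phi> \<le> 1"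
proof -
  define R where "R = Rphi \<phi>"
  have "n \<noteq> 0"
    using n(2) \<open>0 < \<delta>\<close> \<open>0 \<le> A\<close> by auto
  note R_bounds = Dn_Rphi_bounds[OF \<phi> this, folded R_def]
  have "(8 * real CARD('n) / \<delta>) * R \<le> 1"
    using R_bounds(2)[OF n(1)] .
  then have dR: "real CARD('n) * R \<le> \<delta> / 8"
    using \<open>0 < \<delta>\<close> by (simp add: field_simps)
  have "R \<le> real CARD('n) * R"
    using R_bounds(1) by simp
  then show "real CARD('n) * Rphi \<phi> < \<delta>" "4 * Rphi \<phi> < \<delta>"
    using dR \<open>0 < \<delta>\<close> by (simp_all add: R_def)
  have "R \<le> 1"
    using R_bounds(2)[of 1] \<open>n \<noteq> 0\<close> by simp
  then have "R * (A + \<delta> + 2 * R) \<le> (A + \<delta> + 2) * R"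
    using R_bounds(1) by (simp add: algebra_simps mult_left_le_one_le)
  then show "Rphi \<phi> * (A + \<delta> + 2 * Rphi \<phi>) < 1"
    using R_bounds(3)[OF n(2)] by (simp add: R_def)
  show "2 * M * Rphi \<phi> \<le> 1"
    using R_bounds(2)[OF n(3)] by (simp add: R_def)
qed

lemma norm_Dalpha_conv_Omega_sub_le:
  fixes f :: "real^'n::{finite,linorder} \<Rightarrow> complex"
  assumes "open \<Omega>" and sm: "smooth_on \<Omega> f"
    and K\<delta>: "(\<Union>x\<in>K. ball x (2 * \<delta>)) \<subseteq> \<Omega>"
    and A: "\<And>x. x \<in> K \<Longrightarrow> norm x \<le> A"
    and "0 \<le> B"
    and B: "\<And>l z. length l = Suc p \<Longrightarrow> z \<in> (\<Union>x\<in>K. cball x \<delta>) \<Longrightarrow> norm (pdiffs (l @ mi_list \<alpha>) f z) \<le> B"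
    and \<phi>: "\<phi> \<in> Dn n" and "n \<noteq> 0" "p \<le> n"
    and small: "real CARD('n) * Rphi \<phi> < \<delta>" "4 * Rphi \<phi> < \<delta>" "Rphi \<phi> * (A + \<delta> + 2 * Rphi \<phi>) < 1"
      "2 * (real CARD('n) ^ Suc p * B) * Rphi \<phi> \<le> 1"
    and "x \<in> K"
  shows "norm (Dalpha \<alpha> (conv_Omega \<Omega> f \<phi>) x - Dalpha \<alpha> f x) \<le> Rphi \<phi> ^ p"
proof -
  define R where "R = Rphi \<phi>"
  define c where "c = (\<chi> i::'n. R)"
  define M where "M = real CARD('n) ^ Suc p * B"
  note cube_integrals = Dn_cube_integrals[OF \<phi> \<open>n \<noteq> 0\<close> c_def[unfolded R_def]]
  have D0: "\<phi> \<in> D0" and "0 < R"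
    using \<phi> \<open>n \<noteq> 0\<close> Dn_Rphi_bounds(1)[OF \<phi> \<open>n \<noteq> 0\<close>] by (simp_all add: Dn_def R_def)
  have "Dalpha \<alpha> (conv_Omega \<Omega> f \<phi>) x
      = integral (cbox (- c) c) (\<lambda>s. pdiffs (mi_list \<alpha>) f (x - s) * \<phi> s)"
    unfolding Dalpha_eq_pdiffs R_def
    using \<open>0 < R\<close> cube_integrals(1) small
    by (intro pdiffs_conv_Omega_near_compact[OF \<open>open \<Omega>\<close> sm D0 _ _ _ K\<delta> A] \<open>x \<in> K\<close>)
       (auto simp: c_def R_def)
  moreover have "norm (integral (cbox (- c) c) (\<lambda>s. pdiffs (mi_list \<alpha>) f (x - s) * \<phi> s) - pdiffs (mi_list \<alpha>) f x)
      \<le> M * R ^ Suc p * integral (cbox (- c) c) (\<lambda>s. norm (\<phi> s))"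
  proof (unfold M_def, rule norm_convolution_sub_le[OF \<open>open \<Omega>\<close> sm _ _ _ \<open>0 \<le> B\<close>])
    show "norm s \<le> real CARD('n) * R" if "s \<in> cbox (- c) c" for s
      using that by (simp add: c_def norm_le_if_mem_cbox_uniform)
    have "cball x (real CARD('n) * R) \<subseteq> cball x \<delta>" "cball x \<delta> \<subseteq> ball x (2 * \<delta>)"
      using small(1,2) \<open>0 < R\<close> by (simp_all add: R_def subset_cball cball_subset_ball_iff)
    then show "cball x (real CARD('n) * R) \<subseteq> \<Omega>"
      using K\<delta> \<open>x \<in> K\<close> by blast
    show "norm (pdiffs (l @ mi_list \<alpha>) f z) \<le> B" if "length l = Suc p" "z \<in> cball x (real CARD('n) * R)" for l z
      using B that \<open>cball x (real CARD('n) * R) \<subseteq> cball x \<delta>\<close> \<open>x \<in> K\<close> by blast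
  qed (use continuous_on_D0[OF D0] norm_le_Rphi[OF D0] cube_integrals \<open>p \<le> n\<close> in \<open>auto simp: R_def intro: continuous_on_subset\<close>)
  moreover have "M * R ^ Suc p * integral (cbox (- c) c) (\<lambda>s. norm (\<phi> s)) \<le> R ^ p"
  proof -
    have "1 / real n \<le> 1"
      using \<open>n \<noteq> 0\<close> by simp
    then have "integral (cbox (- c) c) (\<lambda>s. norm (\<phi> s)) \<le> 2"
      using cube_integrals(3) by linarith
    moreover have "0 \<le> M * R ^ Suc p"
      using \<open>0 < R\<close> \<open>0 \<le> B\<close> by (simp add: M_def)
    ultimately have "M * R ^ Suc p * integral (cbox (- c) c) (\<lambda>s. norm (\<phi> s)) \<le> M * R ^ Suc p * 2"
      by (rule mult_left_mono)
    also have "\<dots> = (2 * M * R) * R ^ p"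
      by (simp add: algebra_simps)
    also have "\<dots> \<le> R ^ p"
      using small(4) \<open>0 < R\<close> by (simp add: M_def R_def mult_left_le_one_le)
    finally show ?thesis .
  qed
  ultimately show ?thesis
    by (simp add: Dalpha_eq_pdiffs R_def)
qed

lemma smooth_on_pdiffs_bounded:
  assumes "smooth_on \<Omega> f" "compact K" "K \<subseteq> \<Omega>" "finite L"
  obtains B where "0 \<le> B" "\<And>l z. l \<in> L \<Longrightarrow> z \<in> K \<Longrightarrow> norm (pdiffs l f z) \<le> B"
proof -
  have "bounded (pdiffs l f ` K)" for l
    using assms(1-3)
    by (intro compact_imp_bounded compact_continuous_image continuous_on_subset[OF smooth_on_continuous_pdiffs])
  then have "bounded (\<Union>l\<in>L. pdiffs l f ` K)"
    using assms(4) by (simp add: bounded_UN)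
  then show ?thesis
    using that by (auto simp: bounded_pos intro: less_imp_le)
qed

theorem lemma3p5:
  fixes \<Omega> :: "((real, 'n::{finite,linorder}) vec) set" and f :: "(real, 'n) vec \<Rightarrow> complex"
  assumes "open \<Omega>" and "smooth_on \<Omega> f"
  shows "\<forall>K \<alpha> (p::nat). compact K \<and> K \<subseteq> \<Omega> \<and> p \<ge> 1 \<longrightarrow>
           (\<exists>n::nat. \<forall>\<phi> \<in> Dn n. \<forall>x \<in> K.
              norm (Dalpha \<alpha> (conv_Omega \<Omega> f \<phi>) x - Dalpha \<alpha> f x) \<le> Rphi \<phi> ^ p)"
proof (intro allI impI)
  fix K and \<alpha> :: "'n \<Rightarrow> nat" and p :: nat
  assume "compact K \<and> K \<subseteq> \<Omega> \<and> p \<ge> 1"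
  then obtain \<delta> where "\<delta> > 0" and K\<delta>: "(\<Union>x\<in>K. ball x (2 * \<delta>)) \<subseteq> \<Omega>" and "compact K"
    using compact_subset_open_imp_ball_epsilon_subset[OF _ \<open>open \<Omega>\<close>, of K]
    by (metis field_sum_of_halves half_gt_zero mult_2)
  then have "(\<Union>x\<in>K. cball x \<delta>) \<subseteq> \<Omega>"
    by (fastforce simp: dist_norm)
  then obtain B where "0 \<le> B" and B: "\<And>l z. l \<in> (\<lambda>l. l @ mi_list \<alpha>) ` {l. length l = Suc p} \<Longrightarrow>
      z \<in> (\<Union>x\<in>K. cball x \<delta>) \<Longrightarrow> norm (pdiffs l f z) \<le> B"
    using smooth_on_pdiffs_bounded[OF \<open>smooth_on \<Omega> f\<close> compact_minkowski_sum_cball[OF \<open>compact K\<close>]]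
    by (metis finite_imageI finite_list_length)
  have B': "norm (pdiffs (l @ mi_list \<alpha>) f z) \<le> B" if "length l = Suc p" "z \<in> (\<Union>x\<in>K. cball x \<delta>)" for l z
    using that by (intro B) auto
  obtain A where "A > 0" and A: "\<And>x. x \<in> K \<Longrightarrow> norm x \<le> A"
    using compact_imp_bounded[OF \<open>compact K\<close>] by (auto simp: bounded_pos)
  define M where "M = real CARD('n) ^ Suc p * B"
  define n where "n = p + nat \<lceil>8 * real CARD('n) / \<delta>\<rceil> + nat \<lceil>A + \<delta> + 2\<rceil> + nat \<lceil>2 * M\<rceil> + 1"
  have n: "8 * real CARD('n) / \<delta> \<le> real n" "A + \<delta> + 2 < real n" "2 * M \<le> real n"
    using real_nat_ceiling_ge[of "8 * real CARD('n) / \<delta>"] real_nat_ceiling_ge[of "A + \<delta> + 2"]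
      real_nat_ceiling_ge[of "2 * M"]
    unfolding n_def by linarith+
  have "n \<noteq> 0" "p \<le> n"
    by (simp_all add: n_def)
  show "\<exists>n. \<forall>\<phi>\<in>Dn n. \<forall>x\<in>K. norm (Dalpha \<alpha> (conv_Omega \<Omega> f \<phi>) x - Dalpha \<alpha> f x) \<le> Rphi \<phi> ^ p"
  proof (intro exI[of _ n] ballI)
    fix \<phi> :: "(real, 'n) vec \<Rightarrow> complex" and x
    assume "\<phi> \<in> Dn n" "x \<in> K"
    with Dn_Rphi_small[OF \<open>\<phi> \<in> Dn n\<close> \<open>\<delta> > 0\<close> less_imp_le[OF \<open>A > 0\<close>] n]
    show "norm (Dalpha \<alpha> (conv_Omega \<Omega> f \<phi>) x - Dalpha \<alpha> f x) \<le> Rphi \<phi> ^ p"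
      using \<open>n \<noteq> 0\<close> \<open>p \<le> n\<close>
      by (intro norm_Dalpha_conv_Omega_sub_le[OF \<open>open \<Omega>\<close> \<open>smooth_on \<Omega> f\<close> K\<delta> A \<open>0 \<le> B\<close> B'])
         (simp_all add: M_def)
  qed
qed

end
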